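(* For every $n\ge 1$ and every Dyck path $D\in\mathcal{D}_n$, $\varphi(\psi(D))=\zeta(D)$, where $\zeta$ is the zeta map. In other words $\varphi\circ\psi=\zeta$.
   Context: A Dyck path of size $n$ is a lattice path from $(0,0)$ to $(n,n)$ with steps $\uparrow=(0,1)$ and $\rightarrow=(1,0)$ staying weakly above $y=x$; $\mathcal{D}_n$ is their set. Its area vector $(a_1,\dots,a_n)$ has $a_i$ equal to the number of full unit squares lying between the path and the diagonal $y=x$ in the row $i-1\le y\le i$ (area vectors are exactly the integer sequences with $a_1=0$, $0\le a_i\le a_{i-1}+1$, and determine the path). For a finite $S=\{x_1<\dots<x_n\}\subset\mathbb{R}$, $\preceq_S$ is the partial order on $[n]$ with $i\prec_S j$ iff $x_i+1<x_j$; a unit interval poset is a poset isomorphic to some $([n],\preceq_S)$ ($S$ is a starting set). $\psi$: for $D\in\mathcal{D}_n$ with area vector $(a_1,\dots,a_n)$, $\psi(D)$ is the poset on $[n]$ with $i\prec j$ iff either $a_i+2\le a_j$, or ($a_i+1=a_j$ and $i<j$); it is a unit interval poset. $\varphi$: for a unit interval poset $P$, choose a starting set $S$ of $P$ with $S\cap S^+=\varnothing$ where $S^+=\{x+1:x\in S\}$; write $S\cup S^+=\{y_1<\dots<y_{2n}\}$; $\varphi(P)$ is the Dyck path whose $i$-th step is $\uparrow$ if $y_i\in S$ and $\rightarrow$ otherwise (this is independent of the choice of $S$). Zeta map $\zeta:\mathcal{D}_n\to\mathcal{D}_n$ (Haglund's zeta map): for $D$ with area vector $(a_1,\dots,a_n)$,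 $\zeta(D)$ is the concatenation, for $\ell=0,1,2,\dots,\max_i a_i+1$ in this order, of the words obtained by scanning $j=1,2,\dots,n$ from left to right and writing $\uparrow$ whenever $a_j=\ell$ and $\rightarrow$ whenever $a_j=\ell-1$ (and nothing otherwise). *)

theory Defs
  imports Complex_Main
begin

text \<open>A path is a list of steps: True = up step (0,1), False = right step (1,0).\<close>

definition dyck_path :: "nat \<Rightarrow> bool list \<Rightarrow> bool" where
  "dyck_path n w \<longleftrightarrow> length w = 2 * n \<and> length (filter id w) = n \<and>
     (\<forall>k \<le> length w. length (filter Not (take k w)) \<le> length (filter id (take k w)))"

text \<open>Area vector (a_1,...,a_n), stored 0-indexed: entry i-1 is a_i.
  The i-th up step starts at x-coordinate x_i = number of right steps before it;
  row i-1 <= y <= i has (i-1) - x_i full squares between path and diagonal.\<close>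

definition up_positions :: "bool list \<Rightarrow> nat list" where
  "up_positions w = filter (\<lambda>j. w ! j) [0..<length w]"

definition area_vector :: "bool list \<Rightarrow> nat list" where
  "area_vector w = map (\<lambda>i. i - length (filter Not (take (up_positions w ! i) w)))
                       [0..<length (up_positions w)]"

definition psi :: "nat \<Rightarrow> bool list \<Rightarrow> nat \<Rightarrow> nat \<Rightarrow> bool" where
  "psi n D i j \<longleftrightarrow> i \<in> {1..n} \<and> j \<in> {1..n} \<and>
     (let a = area_vector D in
        a ! (i-1) + 2 \<le> a ! (j-1) \<or> (a ! (i-1) + 1 = a ! (j-1) \<and> i < j))"

definition sel :: "real set \<Rightarrow> nat \<Rightarrow> real" where
  "sel S i = sorted_list_of_set S ! (i - 1)"

definition starting_set :: "nat \<Rightarrow> (nat \<Rightarrow> nat \<Rightarrow> bool) \<Rightarrow> real set \<Rightarrow> bool" where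
  "starting_set n P S \<longleftrightarrow> finite S \<and> card S = n \<and>
     (\<exists>g. bij_betw g {1..n} {1..n} \<and>
        (\<forall>i\<in>{1..n}. \<forall>j\<in>{1..n}. P i j \<longleftrightarrow> sel S (g i) + 1 < sel S (g j)))"

definition shift1 :: "real set \<Rightarrow> real set" where
  "shift1 S = (\<lambda>x. x + 1) ` S"

definition phi :: "nat \<Rightarrow> (nat \<Rightarrow> nat \<Rightarrow> bool) \<Rightarrow> bool list" where
  "phi n P = (let S = (SOME S. starting_set n P S \<and> S \<inter> shift1 S = {}) in
              map (\<lambda>y. y \<in> S) (sorted_list_of_set (S \<union> shift1 S)))"

definition zeta :: "bool list \<Rightarrow> bool list" where
  "zeta D = (let a = area_vector D in
     concat (map (\<lambda>l. concat (map (\<lambda>aj. if aj = l then [True]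
                                         else if aj + 1 = l then [False] else []) a))
                 [0..<Max (set a) + 2]))"

end

theory Submission
  imports Defs "HOL-Library.Multiset" "HOL-Library.Product_Lexorder"
begin

text \<open>Two disjoint finite sets \<open>A\<close>, \<open>B\<close> of a linear order determine a word: list
  \<open>A \<union> B\<close> increasingly, writing an up step for each element of \<open>A\<close> and a right step for
  each element of \<open>B\<close>. This word depends only on \<open>card A\<close> and on the multiset of the numbers
  \<open>#{a \<in> A. a < b}\<close>, \<open>b \<in> B\<close>.
  For \<open>\<phi>(P)\<close> take \<open>A = S\<close>, \<open>B = S + 1\<close>: as \<open>S\<close> misses \<open>S + 1\<close>, the number attached to
  \<open>x\<^sub>v + 1\<close> counts the \<open>w\<close> that are not above \<open>v\<close> in \<open>P\<close>.
  For \<open>\<zeta>(D)\<close> take \<open>A = {(a\<^sub>j, j)}\<close>, \<open>B = {(a\<^sub>j + 1, j)}\<close> in the lexicographic order: the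
  number attached to \<open>(a\<^sub>j + 1, j)\<close> counts the \<open>i\<close> with \<open>(a\<^sub>i, i) < (a\<^sub>j + 1, j)\<close>, which are
  exactly the \<open>i\<close> not above \<open>j\<close> in \<open>\<psi>(D)\<close>. So the two words agree, provided \<open>\<psi>(D)\<close> has a
  starting set disjoint from its shift; \<open>x\<^sub>j = a\<^sub>j + j/(n+1)\<close> is one.\<close>

definition interleave_word :: "'a::linorder set \<Rightarrow> 'a set \<Rightarrow> bool list" where
  "interleave_word A B = map (\<lambda>x. x \<in> A) (sorted_list_of_set (A \<union> B))"

text \<open>\<open>word_of_up_counts t N cs\<close> continues a word that already has \<open>t\<close> up steps: its
  \<open>k\<close>-th right step comes right after the \<open>(cs ! k)\<close>-th up step, and the whole word has \<open>N\<close>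
  up steps (for non-decreasing \<open>cs\<close> between \<open>t\<close> and \<open>N\<close>).\<close>

fun word_of_up_counts :: "nat \<Rightarrow> nat \<Rightarrow> nat list \<Rightarrow> bool list" where
  "word_of_up_counts t N [] = replicate (N - t) True"
| "word_of_up_counts t N (c # cs) = replicate (c - t) True @ False # word_of_up_counts c N cs"

definition below_counts :: "'a::linorder set \<Rightarrow> 'a set \<Rightarrow> nat multiset" where
  "below_counts A B = image_mset (\<lambda>b. card {a \<in> A. a < b}) (mset_set B)"

lemma sorted_list_of_set_strict_sorted:
  "sorted_wrt (<) xs \<Longrightarrow> sorted_list_of_set (set xs) = xs"
  by (simp add: sorted_list_of_set_sort_remdups strict_sorted_iff distinct_remdups_id sorted_sort_id)

lemma sorted_list_of_set_split:
  fixes X :: "'a::linorder set"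
  assumes "finite X" "b \<in> X"
  shows "sorted_list_of_set X
           = sorted_list_of_set {x \<in> X. x < b} @ b # sorted_list_of_set {x \<in> X. b < x}"
proof -
  let ?xs = "sorted_list_of_set {x \<in> X. x < b} @ b # sorted_list_of_set {x \<in> X. b < x}"
  have "sorted_wrt (<) ?xs" using assms
    by (auto simp: sorted_wrt_append strict_sorted_list_of_set)
  moreover have "set ?xs = X" using assms by auto
  ultimately show ?thesis using sorted_list_of_set_strict_sorted[of ?xs] by simp
qed

lemma card_split_at_nonmember:
  fixes A :: "'a::linorder set"
  assumes "finite A" "b \<notin> A"
  shows "card {a \<in> A. Q a} = card {a \<in> A. a < b \<and> Q a} + card {a \<in> A. b < a \<and> Q a}"
proof -
  have "a < b \<or> b < a" if "a \<in> A" for a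
    using assms(2) that by (cases a b rule: linorder_cases) auto
  then have "{a \<in> A. Q a} = {a \<in> A. a < b \<and> Q a} \<union> {a \<in> A. b < a \<and> Q a}"
    by auto
  moreover have "{a \<in> A. a < b \<and> Q a} \<inter> {a \<in> A. b < a \<and> Q a} = {}"
    by auto
  ultimately show ?thesis using assms(1) by (simp add: card_Un_disjoint)
qed

lemma interleave_word_Min_right:
  assumes "finite A" "finite B" "A \<inter> B = {}" "b \<in> B" "\<forall>x\<in>B. b \<le> x"
  shows "interleave_word A B
           = replicate (card {a \<in> A. a < b}) True @ False # interleave_word {a \<in> A. b < a} (B - {b})"
proof -
  have "b \<notin> A" using assms(3,4) by auto
  have below: "{x \<in> A \<union> B. x < b} = {a \<in> A. a < b}"
    using assms(5) by (auto dest: leD)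
  have above: "{x \<in> A \<union> B. b < x} = {a \<in> A. b < a} \<union> (B - {b})"
    using assms(4,5) \<open>b \<notin> A\<close> by (auto simp: order_le_neq_trans)
  have "sorted_list_of_set (A \<union> B)
          = sorted_list_of_set {x \<in> A \<union> B. x < b} @ b # sorted_list_of_set {x \<in> A \<union> B. b < x}"
    using assms(1,2,4) by (intro sorted_list_of_set_split) auto
  then have "interleave_word A B = map (\<lambda>x. x \<in> A) (sorted_list_of_set {a \<in> A. a < b})
      @ False # map (\<lambda>x. x \<in> A) (sorted_list_of_set ({a \<in> A. b < a} \<union> (B - {b})))"
    unfolding interleave_word_def below above using \<open>b \<notin> A\<close> by simp
  also have "map (\<lambda>x. x \<in> A) (sorted_list_of_set {a \<in> A. a < b})
               = map (\<lambda>_. True) (sorted_list_of_set {a \<in> A. a < b})"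
    using assms(1) by (intro map_cong) auto
  also have "map (\<lambda>x. x \<in> A) (sorted_list_of_set ({a \<in> A. b < a} \<union> (B - {b})))
               = interleave_word {a \<in> A. b < a} (B - {b})"
    unfolding interleave_word_def using assms(1,2,3) by (intro map_cong) auto
  finally show ?thesis by (simp add: map_replicate_const)
qed

lemma interleave_word_eq_word_of_up_counts:
  fixes A B :: "'a::linorder set"
  assumes "finite A" "finite B" "A \<inter> B = {}"
  shows "interleave_word A B
           = word_of_up_counts t (t + card A) (map (\<lambda>b. t + card {a \<in> A. a < b}) (sorted_list_of_set B))"
  using assms
proof (induction "card B" arbitrary: A B t)
  case 0
  then have "B = {}" by auto
  moreover have "map (\<lambda>x. x \<in> A) (sorted_list_of_set A) = map (\<lambda>x. True) (sorted_list_of_set A)"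
    using 0 by (intro map_cong) auto
  ultimately show ?case using 0 by (simp add: interleave_word_def map_replicate_const)
next
  case (Suc m)
  define b where "b = Min B"
  define A1 where "A1 = {a \<in> A. a < b}"
  define A2 where "A2 = {a \<in> A. b < a}"
  have "B \<noteq> {}" using Suc.hyps(2) by auto
  then have b: "b \<in> B" "\<forall>x\<in>B. b \<le> x" using Suc.prems(2) by (auto simp: b_def)
  then have "b \<notin> A" using Suc.prems(3) by auto
  have "finite A2" using Suc.prems(1) by (simp add: A2_def)
  have sorted_B: "sorted_list_of_set B = b # sorted_list_of_set (B - {b})"
    using sorted_list_of_set_nonempty[of B] Suc.prems(2) \<open>B \<noteq> {}\<close> by (simp add: b_def)
  have card_A: "card A = card A1 + card A2"
    using card_split_at_nonmember[OF Suc.prems(1) \<open>b \<notin> A\<close>, of "\<lambda>_. True"]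
    by (simp add: A1_def A2_def)
  have counts: "t + card {a \<in> A. a < c} = t + card A1 + card {a \<in> A2. a < c}"
    if "c \<in> set (sorted_list_of_set (B - {b}))" for c
  proof -
    have "b < c" using that b Suc.prems(2) by (auto simp: order_le_neq_trans)
    then have "{a \<in> A. a < b \<and> a < c} = A1" "{a \<in> A. b < a \<and> a < c} = {a \<in> A2. a < c}"
      by (auto simp: A1_def A2_def)
    then show ?thesis
      using card_split_at_nonmember[OF Suc.prems(1) \<open>b \<notin> A\<close>, of "\<lambda>a. a < c"] by simp
  qed
  have maps: "map (\<lambda>c. t + card {a \<in> A. a < c}) (sorted_list_of_set (B - {b}))
      = map (\<lambda>c. t + card A1 + card {a \<in> A2. a < c}) (sorted_list_of_set (B - {b}))"
    using counts by (rule map_cong[OF refl])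
  have "word_of_up_counts t (t + card A) (map (\<lambda>c. t + card {a \<in> A. a < c}) (sorted_list_of_set B))
      = replicate (card A1) True @ False # word_of_up_counts (t + card A1) (t + card A1 + card A2)
          (map (\<lambda>c. t + card A1 + card {a \<in> A2. a < c}) (sorted_list_of_set (B - {b})))"
    unfolding sorted_B list.map maps card_A
    by (simp add: A1_def[symmetric] add.assoc)
  moreover have "interleave_word A2 (B - {b}) = word_of_up_counts (t + card A1) (t + card A1 + card A2)
      (map (\<lambda>c. t + card A1 + card {a \<in> A2. a < c}) (sorted_list_of_set (B - {b})))"
    using Suc b \<open>finite A2\<close> by (intro Suc.hyps) (auto simp: A2_def)
  ultimately show ?case
    using interleave_word_Min_right[OF Suc.prems b] by (simp add: A1_def A2_def)
qed

lemma interleave_word_eq_below_counts: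
  fixes A B :: "'a::linorder set"
  assumes "finite A" "finite B" "A \<inter> B = {}"
  shows "interleave_word A B
           = word_of_up_counts 0 (card A) (sorted_list_of_multiset (below_counts A B))"
proof -
  let ?counts = "map (\<lambda>b. card {a \<in> A. a < b}) (sorted_list_of_set B)"
  have "sorted_wrt (\<lambda>x y. card {a \<in> A. a < x} \<le> card {a \<in> A. a < y}) (sorted_list_of_set B)"
    using sorted_sorted_list_of_set[of B]
    by (rule sorted_wrt_mono_rel[rotated]) (auto intro!: card_mono simp: assms(1))
  then have "sorted ?counts" by (simp add: sorted_map)
  moreover have "mset (sorted_list_of_set B) = mset_set B"
    by (metis mset_sorted_list_of_multiset sorted_list_of_mset_set)
  then have "below_counts A B = mset ?counts" by (simp add: below_counts_def)
  ultimately have "sorted_list_of_multiset (below_counts A B) = ?counts"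
    by (metis sorted_list_of_multiset_mset sorted_sort_id)
  then show ?thesis using interleave_word_eq_word_of_up_counts[OF assms, of 0] by simp
qed

lemma interleave_word_cong:
  fixes A B :: "'a::linorder set" and A' B' :: "'b::linorder set"
  assumes "finite A" "finite B" "A \<inter> B = {}"
    and "finite A'" "finite B'" "A' \<inter> B' = {}"
    and "card A = card A'" "below_counts A B = below_counts A' B'"
  shows "interleave_word A B = interleave_word A' B'"
  using assms by (simp add: interleave_word_eq_below_counts)

definition count_not_above :: "nat \<Rightarrow> (nat \<Rightarrow> nat \<Rightarrow> bool) \<Rightarrow> nat \<Rightarrow> nat" where
  "count_not_above n P v = card {w \<in> {1..n}. \<not> P v w}"

lemma bij_betw_sel:
  assumes "finite S" "card S = n"
  shows "bij_betw (sel S) {1..n} S"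
proof -
  have "bij_betw ((!) (sorted_list_of_set S)) {..<n} S"
    using assms by (intro bij_betw_nth) auto
  moreover have "bij_betw (\<lambda>i. i - 1) {1..n} {..<n}"
    by (rule bij_betw_byWitness[where f' = Suc]) auto
  ultimately have "bij_betw ((!) (sorted_list_of_set S) \<circ> (\<lambda>i. i - 1)) {1..n} S"
    by (rule bij_betw_trans[rotated])
  moreover have "sel S = (!) (sorted_list_of_set S) \<circ> (\<lambda>i. i - 1)"
    by (auto simp: sel_def)
  ultimately show ?thesis by simp
qed

lemma below_counts_starting_set:
  assumes "starting_set n P S" "S \<inter> shift1 S = {}"
  shows "below_counts S (shift1 S) = image_mset (count_not_above n P) (mset_set {1..n})"
proof -
  obtain g where fin: "finite S" and card_S: "card S = n" and g: "bij_betw g {1..n} {1..n}"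
    and P: "\<forall>i\<in>{1..n}. \<forall>j\<in>{1..n}. P i j \<longleftrightarrow> sel S (g i) + 1 < sel S (g j)"
    using assms(1) unfolding starting_set_def by blast
  define x where "x = sel S \<circ> g"
  have x: "bij_betw x {1..n} S"
    unfolding x_def using bij_betw_trans[OF g bij_betw_sel[OF fin card_S]] .
  then have S: "S = x ` {1..n}" by (simp add: bij_betw_def)
  have count: "card {a \<in> S. a < x v + 1} = count_not_above n P v" if v: "v \<in> {1..n}" for v
  proof -
    have "x w \<noteq> x v + 1" if "w \<in> {1..n}" for w
      using assms(2) that v unfolding S shift1_def by blast
    then have "{w \<in> {1..n}. x w < x v + 1} = {w \<in> {1..n}. \<not> P v w}"
      using P v by (force simp: x_def)
    moreover have "{a \<in> S. a < x v + 1} = x ` {w \<in> {1..n}. x w < x v + 1}"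
      by (auto simp: S)
    moreover have "inj_on x {w \<in> {1..n}. \<not> P v w}"
      using x by (auto simp: bij_betw_def intro: inj_on_subset)
    ultimately show ?thesis by (simp add: count_not_above_def card_image)
  qed
  have "mset_set (shift1 S) = image_mset (\<lambda>a. a + 1) (mset_set S)"
    by (simp add: shift1_def image_mset_mset_set)
  moreover have "mset_set S = image_mset x (mset_set {1..n})"
    using x by (simp add: bij_betw_def image_mset_mset_set)
  ultimately have "below_counts S (shift1 S)
          = image_mset (\<lambda>v. card {a \<in> S. a < x v + 1}) (mset_set {1..n})"
    by (simp add: below_counts_def multiset.map_comp comp_def)
  also have "\<dots> = image_mset (count_not_above n P) (mset_set {1..n})"
    using count by (intro image_mset_cong) simp
  finally show ?thesis .
qed

lemma starting_set_image:
  fixes x :: "nat \<Rightarrow> real"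
  assumes "inj_on x {1..n}" and "\<forall>i\<in>{1..n}. \<forall>j\<in>{1..n}. P i j \<longleftrightarrow> x i + 1 < x j"
  shows "starting_set n P (x ` {1..n})"
proof -
  define S where "S = x ` {1..n}"
  have fin: "finite S" and card_S: "card S = n" using assms(1) by (auto simp: S_def card_image)
  have x: "bij_betw x {1..n} S" using assms(1) by (simp add: S_def inj_on_imp_bij_betw)
  have sel: "bij_betw (sel S) {1..n} S" using bij_betw_sel[OF fin card_S] .
  define g where "g = inv_into {1..n} (sel S) \<circ> x"
  have g: "bij_betw g {1..n} {1..n}"
    unfolding g_def using bij_betw_trans[OF x bij_betw_inv_into[OF sel]] .
  have sel_g: "sel S (g v) = x v" if "v \<in> {1..n}" for v
    using sel x that by (auto simp: g_def bij_betw_def f_inv_into_f)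
  show ?thesis
    unfolding starting_set_def S_def[symmetric]
    using fin card_S g assms(2) by (intro conjI exI[of _ g] ballI) (simp_all add: sel_g)
qed

lemma of_nat_add_frac_less_iff:
  fixes p q :: nat and s t :: real
  assumes "0 \<le> s" "s < 1" "0 \<le> t" "t < 1"
  shows "real p + s < real q + t \<longleftrightarrow> p < q \<or> p = q \<and> s < t"
proof -
  consider "p < q" | "p = q" | "q < p" by linarith
  then show ?thesis
  proof cases
    case 1
    then have "real p + 1 \<le> real q" by simp
    then show ?thesis using 1 assms by linarith
  next
    case 3
    then have "real q + 1 \<le> real p" by simp
    then show ?thesis using 3 assms by linarith
  qed simp
qed

lemma of_nat_add_frac_eq_iff:
  fixes p q :: nat and s t :: real
  assumes "0 \<le> s" "s < 1" "0 \<le> t" "t < 1"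
  shows "real p + s = real q + t \<longleftrightarrow> p = q \<and> s = t"
proof -
  have "\<not> real p + s < real q + t \<and> \<not> real q + t < real p + s \<longleftrightarrow> p = q \<and> s = t"
    using of_nat_add_frac_less_iff[OF assms] of_nat_add_frac_less_iff[OF assms(3,4,1,2)] by auto
  then show ?thesis by linarith
qed

lemma psi_has_separated_starting_set:
  "\<exists>S. starting_set n (psi n D) S \<and> S \<inter> shift1 S = {}"
proof -
  define a where "a = area_vector D"
  define frac where "frac v = real v / real (n + 1)" for v
  define x where "x v = real (a ! (v - 1)) + frac v" for v
  have frac: "0 \<le> frac v" "frac v < 1" if "v \<in> {1..n}" for v
    using that by (auto simp: frac_def)
  have frac_less_iff: "frac v < frac w \<longleftrightarrow> v < w" for v w
    by (simp add: frac_def divide_less_cancel)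
  have frac_eq_iff: "frac v = frac w \<longleftrightarrow> v = w" for v w
    by (simp add: frac_def)
  have shifted: "x v + 1 = real (a ! (v - 1) + 1) + frac v" for v
    by (simp add: x_def)
  have inj: "inj_on x {1..n}"
  proof (rule inj_onI)
    fix v w assume "v \<in> {1..n}" "w \<in> {1..n}" "x v = x w"
    then show "v = w" by (simp add: x_def of_nat_add_frac_eq_iff frac frac_eq_iff)
  qed
  have psi: "psi n D i j \<longleftrightarrow> x i + 1 < x j" if "i \<in> {1..n}" "j \<in> {1..n}" for i j
  proof -
    have "psi n D i j \<longleftrightarrow> a ! (i - 1) + 1 < a ! (j - 1) \<or> a ! (i - 1) + 1 = a ! (j - 1) \<and> i < j"
      using that by (auto simp: psi_def a_def Let_def)
    moreover have "x i + 1 < x j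
        \<longleftrightarrow> a ! (i - 1) + 1 < a ! (j - 1) \<or> a ! (i - 1) + 1 = a ! (j - 1) \<and> frac i < frac j"
      unfolding shifted by (unfold x_def, rule of_nat_add_frac_less_iff) (use frac that in auto)
    ultimately show ?thesis by (simp add: frac_less_iff)
  qed
  have "x j \<noteq> x i + 1" if "i \<in> {1..n}" "j \<in> {1..n}" for i j
  proof -
    have "x i + 1 = x j \<longleftrightarrow> a ! (i - 1) + 1 = a ! (j - 1) \<and> frac i = frac j"
      unfolding shifted by (unfold x_def, rule of_nat_add_frac_eq_iff) (use frac that in auto)
    then show ?thesis by (auto simp: frac_eq_iff)
  qed
  then have "x ` {1..n} \<inter> shift1 (x ` {1..n}) = {}"
    by (auto simp: shift1_def)
  moreover have "starting_set n (psi n D) (x ` {1..n})"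
    using inj psi by (intro starting_set_image) auto
  ultimately show ?thesis by blast
qed

text \<open>Reading the levels \<open>l = 0, 1, \<dots>\<close> and within each level the indices \<open>j\<close> in turn,
  \<open>\<zeta>\<close> visits the pairs \<open>(l, j)\<close> in lexicographic order, writing an up step at \<open>(a\<^sub>j, j)\<close>
  and a right step at \<open>(a\<^sub>j + 1, j)\<close>.\<close>

definition zeta_ups :: "nat list \<Rightarrow> (nat \<times> nat) set" where
  "zeta_ups a = (\<lambda>j. (a ! j, j)) ` {..<length a}"

definition zeta_rights :: "nat list \<Rightarrow> (nat \<times> nat) set" where
  "zeta_rights a = (\<lambda>j. (a ! j + 1, j)) ` {..<length a}"

lemma concat_map_True_False:
  "concat (map (\<lambda>j. if P j then [True] else if Q j then [False] else []) xs)
     = map P (filter (\<lambda>j. P j \<or> Q j) xs)"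
  by (induction xs) auto

lemma sorted_wrt_concat_map_Pair:
  fixes xs :: "'a::linorder list" and ys :: "'a \<Rightarrow> 'b::linorder list"
  assumes "sorted_wrt (<) xs" "\<And>l. sorted_wrt (<) (ys l)"
  shows "sorted_wrt (<) (concat (map (\<lambda>l. map (Pair l) (ys l)) xs))"
  using assms by (induction xs) (auto simp: sorted_wrt_append sorted_wrt_map)

lemma zeta_eq_interleave_word:
  "zeta D = interleave_word (zeta_ups (area_vector D)) (zeta_rights (area_vector D))"
proof -
  define a where "a = area_vector D"
  define n where "n = length a"
  define levels where "levels = [0..<Max (set a) + 2]"
  define L where "L = concat (map (\<lambda>l. map (Pair l) (filter (\<lambda>j. a ! j = l \<or> a ! j + 1 = l) [0..<n])) levels)"
  have "zeta D = concat (map (\<lambda>l. concat (map (\<lambda>j. if a ! j = l then [True]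
                     else if a ! j + 1 = l then [False] else []) [0..<n])) levels)"
    unfolding zeta_def Let_def a_def[symmetric] levels_def n_def
    by (subst (1) map_nth[symmetric, of a]) (simp only: map_map comp_def)
  also have "\<dots> = map (\<lambda>p. a ! snd p = fst p) L"
    by (simp add: concat_map_True_False L_def map_concat comp_def)
  finally have zeta: "zeta D = map (\<lambda>p. a ! snd p = fst p) L" .
  have "sorted_wrt (<) L" unfolding L_def levels_def
    by (rule sorted_wrt_concat_map_Pair) (auto intro: sorted_wrt_filter simp del: upt_Suc)
  moreover have "set L = zeta_ups a \<union> zeta_rights a"
  proof -
    have "set L = {(l, j). l < Max (set a) + 2 \<and> j < n \<and> (a ! j = l \<or> a ! j + 1 = l)}"
      by (fastforce simp: L_def levels_def image_iff simp del: upt_Suc)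
    moreover have "a ! j < Max (set a) + 1" if "j < n" for j
      using that by (simp add: n_def le_imp_less_Suc)
    ultimately show ?thesis
      by (fastforce simp: zeta_ups_def zeta_rights_def n_def)
  qed
  ultimately have "sorted_list_of_set (zeta_ups a \<union> zeta_rights a) = L"
    using sorted_list_of_set_strict_sorted by metis
  moreover have "map (\<lambda>p. a ! snd p = fst p) L = map (\<lambda>p. p \<in> zeta_ups a) L"
    using \<open>set L = _\<close> by (intro map_cong) (auto simp: zeta_ups_def zeta_rights_def)
  ultimately show ?thesis using zeta by (simp add: interleave_word_def a_def)
qed

lemma below_counts_zeta:
  assumes "length (area_vector D) = n"
  shows "below_counts (zeta_ups (area_vector D)) (zeta_rights (area_vector D))
           = image_mset (count_not_above n (psi n D)) (mset_set {1..n})"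
proof -
  define a where "a = area_vector D"
  define up where "up j = (a ! j, j)" for j
  define right where "right j = (a ! j + 1, j)" for j
  have up_less_right: "up i < right j \<longleftrightarrow> \<not> psi n D (Suc j) (Suc i)" if "i < n" "j < n" for i j
    using that by (cases "i = j") (auto simp: up_def right_def psi_def a_def Let_def)
  have ups: "zeta_ups a = up ` {..<n}"
    using assms by (simp add: zeta_ups_def up_def a_def)
  have count: "card {p \<in> zeta_ups a. p < right j} = count_not_above n (psi n D) (Suc j)"
    if "j < n" for j
  proof -
    have "{p \<in> zeta_ups a. p < right j} = up ` {i \<in> {..<n}. \<not> psi n D (Suc j) (Suc i)}"
      using that by (auto simp: ups up_less_right)
    moreover have "{w \<in> {1..n}. \<not> psi n D (Suc j) w}
        = Suc ` {i \<in> {..<n}. \<not> psi n D (Suc j) (Suc i)}"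
      unfolding image_Suc_lessThan[symmetric] by auto
    ultimately show ?thesis
      by (simp add: count_not_above_def card_image inj_on_def up_def)
  qed
  have "zeta_rights a = right ` {..<n}"
    using assms by (simp add: zeta_rights_def right_def a_def)
  then have "mset_set (zeta_rights a) = image_mset right (mset_set {..<n})"
    by (simp add: image_mset_mset_set inj_on_def right_def)
  then have "below_counts (zeta_ups a) (zeta_rights a)
      = image_mset (\<lambda>j. card {p \<in> zeta_ups a. p < right j}) (mset_set {..<n})"
    by (simp add: below_counts_def multiset.map_comp comp_def)
  also have "\<dots> = image_mset (count_not_above n (psi n D) \<circ> Suc) (mset_set {..<n})"
    using count by (intro image_mset_cong) simp
  also have "\<dots> = image_mset (count_not_above n (psi n D)) (mset_set {1..n})"
    by (simp add: multiset.map_comp[symmetric] image_mset_mset_set image_Suc_lessThan)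
  finally show ?thesis by (simp add: a_def)
qed

lemma length_area_vector: "length (area_vector D) = length (filter id D)"
proof -
  have "length (filter id D) = length (filter id (map ((!) D) [0..<length D]))"
    by (simp only: map_nth)
  then show ?thesis
    by (simp add: area_vector_def up_positions_def filter_map comp_def)
qed

theorem mainTheorem5:
  fixes n :: nat and D :: "bool list"
  assumes "n \<ge> 1" and "dyck_path n D"
  shows "phi n (psi n D) = zeta D"
proof -
  have n: "length (area_vector D) = n"
    using assms(2) by (simp add: dyck_path_def length_area_vector)
  define S where "S = (SOME S. starting_set n (psi n D) S \<and> S \<inter> shift1 S = {})"
  have "starting_set n (psi n D) S \<and> S \<inter> shift1 S = {}"
    unfolding S_def by (rule someI_ex[OF psi_has_separated_starting_set])
  then have S: "starting_set n (psi n D) S" "S \<inter> shift1 S = {}" by auto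
  then have "finite S" "card S = n" by (auto simp: starting_set_def)
  have "phi n (psi n D) = interleave_word S (shift1 S)"
    unfolding phi_def interleave_word_def Let_def S_def by (rule refl)
  also have "\<dots> = interleave_word (zeta_ups (area_vector D)) (zeta_rights (area_vector D))"
  proof (rule interleave_word_cong)
    show "below_counts S (shift1 S) = below_counts (zeta_ups (area_vector D)) (zeta_rights (area_vector D))"
      using below_counts_starting_set[OF S] below_counts_zeta[OF n] by simp
  qed (use S(2) \<open>finite S\<close> \<open>card S = n\<close> n in
        \<open>auto simp: shift1_def zeta_ups_def zeta_rights_def card_image inj_on_def\<close>)
  also have "\<dots> = zeta D"
    by (rule zeta_eq_interleave_word[symmetric])
  finally show ?thesis .
qed

end
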